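(* Let $p$ be a complex polynomial with at least two distinct roots and $h\in\mathbb{C}\setminus\{0\}$. If all the finite fixed points of $N_{h,p}$ are superattracting, then all the roots of $p$ have the same multiplicity. Moreover, if $m$ is this common multiplicity, i.e. $p=q^m$ where $q$ is a polynomial with only simple roots, then $N_{h,p}=N_q$, where $N_q(z)=z-\frac{q(z)}{q'(z)}$ is the classical Newton map of $q$.
   Context: The relaxed Newton map is $N_{h,p}(z)=z-h\,\frac{p(z)}{p'(z)}$; its finite fixed points are the roots of $p$. A fixed point is superattracting if its multiplier is $0$. *)

theory Defs
  imports "HOL-Complex_Analysis.Complex_Analysis" "HOL-Computational_Algebra.Polynomial"
begin

text \<open>Relaxed Newton map N_{h,p}(z) = z - h p(z)/p'(z). With the HOL convention x/0 = 0
  this agrees with the holomorphic (continuously extended) map near every root of p.\<close>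
definition relaxed_newton :: "complex \<Rightarrow> complex poly \<Rightarrow> complex \<Rightarrow> complex" where
  "relaxed_newton h p z = z - h * poly p z / poly (pderiv p) z"

definition newton_map :: "complex poly \<Rightarrow> complex \<Rightarrow> complex" where
  "newton_map q z = z - poly q z / poly (pderiv q) z"

definition superattracting :: "(complex \<Rightarrow> complex) \<Rightarrow> complex \<Rightarrow> bool" where
  "superattracting f a \<longleftrightarrow> f a = a \<and> (f has_field_derivative 0) (at a)"

end

theory Submission
  imports Defs
begin

text \<open>Near a root a of multiplicity k, write p = (z - a)^k g with g(a) \<noteq> 0; cancelling
  (z - a)^(k-1) shows that N_{h,p} is holomorphic at a with multiplier 1 - h/k. Superattraction
  at every root thus forces every multiplicity to equal h; and if p = q^m with m = h, then
  h p/p' = m q^m/(m q^(m-1) q') = q/q', so N_{h,p} = N_q.\<close>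

lemma pderiv_linear_power_mult:
  fixes a :: "'a::idom"
  shows "pderiv ([:-a, 1:] ^ Suc n * g) =
           [:-a, 1:] ^ n * (smult (of_nat (Suc n)) g + [:-a, 1:] * pderiv g)"
proof -
  have "pderiv ([:-a, 1:] ^ Suc n) = smult (of_nat (Suc n)) ([:-a, 1:] ^ n)"
    using pderiv_power_Suc[of "[:-a, 1:]" n] by (simp add: pderiv_pCons)
  then show ?thesis
    unfolding pderiv_mult by (simp only: power_Suc) (simp add: algebra_simps)
qed

lemma relaxed_newton_root:
  assumes "poly p a = 0"
  shows "relaxed_newton h p a = a"
  using assms by (simp add: relaxed_newton_def)

lemma relaxed_newton_linear_power_mult:
  assumes p: "p = [:-a, 1:] ^ Suc n * g"
  shows "relaxed_newton h p =
           (\<lambda>z. z - h * ((z - a) * poly g z /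
                 (of_nat (Suc n) * poly g z + (z - a) * poly (pderiv g) z)))"
proof
  fix z
  show "relaxed_newton h p z =
          z - h * ((z - a) * poly g z / (of_nat (Suc n) * poly g z + (z - a) * poly (pderiv g) z))"
  proof (cases "z = a")
    case True
    then show ?thesis using p by (simp add: relaxed_newton_def)
  next
    case False
    have "poly p z = (z - a) ^ n * ((z - a) * poly g z)"
      unfolding p by (simp add: algebra_simps)
    moreover have "poly (pderiv p) z =
        (z - a) ^ n * (of_nat (Suc n) * poly g z + (z - a) * poly (pderiv g) z)"
      unfolding p pderiv_linear_power_mult by (simp add: algebra_simps)
    ultimately show ?thesis
      using False by (simp add: relaxed_newton_def mult_divide_mult_cancel_left)
  qed
qed

lemma relaxed_newton_multiplier:
  assumes "p \<noteq> 0" and "poly p a = 0"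
  shows "(relaxed_newton h p has_field_derivative 1 - h / of_nat (order a p)) (at a)"
proof -
  obtain n where n: "order a p = Suc n"
    using assms order_root not0_implies_Suc by blast
  obtain g where p: "p = [:-a, 1:] ^ Suc n * g" and "\<not> [:-a, 1:] dvd g"
    using order_decomp[OF \<open>p \<noteq> 0\<close>] n by metis
  then have "poly g a \<noteq> 0"
    by (simp add: poly_eq_0_iff_dvd)
  moreover have "of_nat (Suc n) \<noteq> (0::complex)"
    by (rule of_nat_neq_0)
  ultimately show ?thesis
    unfolding relaxed_newton_linear_power_mult[OF p] n
    by (auto intro!: derivative_eq_intros simp del: of_nat_Suc simp: field_simps power2_eq_square)
qed

lemma superattracting_relaxed_newton_iff:
  assumes "p \<noteq> 0" and "poly p a = 0"
  shows "superattracting (relaxed_newton h p) a \<longleftrightarrow> h = of_nat (order a p)"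
proof -
  have "order a p \<noteq> 0"
    using assms order_root by blast
  have "superattracting (relaxed_newton h p) a \<longleftrightarrow>
          (relaxed_newton h p has_field_derivative 0) (at a)"
    using relaxed_newton_root[OF assms(2)] by (simp add: superattracting_def)
  also have "\<dots> \<longleftrightarrow> 1 - h / of_nat (order a p) = 0"
    using relaxed_newton_multiplier[OF assms, of h] DERIV_unique by metis
  also have "\<dots> \<longleftrightarrow> h = of_nat (order a p)"
    using \<open>order a p \<noteq> 0\<close> by (auto simp: field_simps)
  finally show ?thesis .
qed

lemma relaxed_newton_power_eq_newton_map:
  assumes "m \<noteq> 0"
  shows "relaxed_newton (of_nat m) (q ^ m) = newton_map q"
proof
  fix z
  obtain n where m: "m = Suc n"
    using assms not0_implies_Suc by blast
  have "poly (pderiv (q ^ m)) z = of_nat m * poly q z ^ n * poly (pderiv q) z"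
    unfolding m pderiv_power_Suc by simp
  moreover have "poly (q ^ m) z = poly q z ^ n * poly q z"
    unfolding m by simp
  ultimately show "relaxed_newton (of_nat m) (q ^ m) z = newton_map q z"
    using assms
    by (cases "poly q z = 0") (simp_all add: relaxed_newton_def newton_map_def)
qed

theorem mainTheorem7:
  fixes p :: "complex poly" and h :: complex
  assumes "p \<noteq> 0"
    and "\<exists>a b. a \<noteq> b \<and> poly p a = 0 \<and> poly p b = 0"
    and "h \<noteq> 0"
    and "\<forall>a. poly p a = 0 \<longrightarrow> superattracting (relaxed_newton h p) a"
  shows "\<exists>m. (\<forall>a. poly p a = 0 \<longrightarrow> order a p = m) \<and>
             (\<forall>q. rsquarefree q \<and> p = q ^ m \<longrightarrow> relaxed_newton h p = newton_map q)"
proof -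
  have h_order: "h = of_nat (order a p)" if "poly p a = 0" for a
    using superattracting_relaxed_newton_iff[OF assms(1) that] assms(4) that by blast
  obtain a0 where a0: "poly p a0 = 0"
    using assms(2) by blast
  define m where "m = order a0 p"
  have "m \<noteq> 0"
    using assms(1) a0 order_root m_def by blast
  have h_m: "h = of_nat m"
    using h_order[OF a0] m_def by simp
  have "\<forall>a. poly p a = 0 \<longrightarrow> order a p = m"
    using h_order h_m by auto
  moreover have "relaxed_newton h p = newton_map q" if "p = q ^ m" for q
    unfolding that h_m by (rule relaxed_newton_power_eq_newton_map[OF \<open>m \<noteq> 0\<close>])
  ultimately show ?thesis
    by blast
qed

end
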